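(* Let $\tau_0>0$, $\rho>1$, $n\ge 1$ an integer, and let $k_a,k_p,k_v,h_w>0$. For unknown constants $\gamma_0,\dots,\gamma_{n-1}\in(0,1)$ put $$\tilde k_a:=\Big[1-\tfrac{1}{\rho}+\tfrac{1}{\rho}\sum_{j=0}^{n-1}\tfrac{\gamma_j}{2^j}\Big]k_a ,$$ so that $\tilde k_a$ can take any value in $\big[(1-\tfrac1\rho)k_a,\,(1+\tfrac1\rho)k_a\big]$. For $\tau\in(0,\tau_0]$ define $$\tilde H(s;\tau)=\frac{\tilde k_a s^2+k_v s+k_p}{\tau s^3+s^2+\gamma s+k_p},\qquad \gamma:=k_v+h_w k_p .$$ Then: (a) If $\|\tilde H(j\omega;\tau)\|_\infty\le 1$ for all $\tau\in(0,\tau_0]$, then $\tilde k_a\in(0,1)$. (b) Let $k_a\in\big(0,\frac{1}{1+1/\rho}\big)$ and let $h_w$ satisfy $$h_w>h_{w,lb}(k_a):=2\tau_0\,\frac{1-\left(1-\frac1\rho\right)k_a}{1-\left(1+\frac1\rho\right)^2k_a^2}.$$ Then there exist $k_p,k_v>0$, not depending on the unknown $\gamma_0,\dots,\gamma_{n-1}\in(0,1)$, such that $\tilde H(s;\tau)$ is internally stable and $\|\tilde H(j\omega;\tau)\|_\infty\le 1$ for all $\tau\in(0,\tau_0]$ and every admissible value of $\tilde k_a$. (c) For every $\rho>1$, the minimizer $k_a^*$ of $h_{w,lb}(k_a)$ over $k_a\in\big(0,\frac{1}{1+1/\rho}\big)$ and the corresponding minimum value $h^*_{w,lb}=h_{w,lb}(k_a^*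 )$ are $$k_a^*=\left(\frac{1-\frac{1}{\sqrt\rho}}{1+\frac{1}{\sqrt\rho}}\right)\frac{1}{1+\frac1\rho},\qquad h^*_{w,lb}=\tau_0\,\frac{\left(1+\frac{1}{\sqrt\rho}\right)^2}{1+\frac1\rho}.$$ Correspondingly, with $k_a=k_a^*$ and any $h_w>h^*_{w,lb}$, there exist $k_p,k_v>0$, not depending on the unknown $\gamma_j$, such that $\|\tilde H(j\omega;\tau)\|_\infty\le 1$ for all $\tau\in(0,\tau_0]$.
   Context: The setting is a vehicle platoon. Vehicle $i$ obeys $\ddot x_i=a_i$ and $\tau\dot a_i+a_i=u_i$, where $\tau\in(0,\tau_0]$ is an uncertain parasitic actuation lag. Each vehicle uses the control law $$u_i=k_a w_{i,i-1}(t)a_{i-1}-k_v(v_i-v_{i-1})-k_p\delta_i ,$$ where $\delta_i=x_i-x_{i-1}+d+h_w v_i$ and $h_w$ is the time headway. The communicated acceleration of the predecessor is corrupted by noise: $$w_{i,i-1}(t)=\Big(1-\tfrac1\rho\Big)+\tfrac1\rho\sum_{j=0}^{n-1}\frac{z_{i,j}(t)}{2^j},$$ where the $z_{i,j}$ are independent binary random processes with time-invariant, unknown means $\gamma_j\in(0,1)$ and $\rho>1$ is the signal-to-noise ratio factor. Taking expectations gives the averaged spacing-error propagation $\bar\delta_i(s)=\tilde H(s;\tau)\bar\delta_{i-1}(s)$, with $\tilde k_a=k_a\,\mathbb E[w_{i,i-1}]$. Here $\|\tilde H(j\omega;\tau)\|_\infty=\sup_{\omega\in\mathbb R}|\tilde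 H(j\omega;\tau)|$. Robust string stability means that $\tilde H$ is internally stable (its denominator is Hurwitz) and $\|\tilde H(j\omega;\tau)\|_\infty\le1$ for all $\tau\in(0,\tau_0]$. *)

theory Defs
  imports Complex_Main "HOL-Library.Extended_Real"
begin

definition ka_tilde :: "real \<Rightarrow> nat \<Rightarrow> (nat \<Rightarrow> real) \<Rightarrow> real \<Rightarrow> real" where
  "ka_tilde \<rho> n g ka = (1 - 1/\<rho> + (1/\<rho>) * (\<Sum>j<n. g j / 2 ^ j)) * ka"

definition admissible_gammas :: "nat \<Rightarrow> (nat \<Rightarrow> real) \<Rightarrow> bool" where
  "admissible_gammas n g \<longleftrightarrow> (\<forall>j<n. 0 < g j \<and> g j < 1)"

definition H_num :: "real \<Rightarrow> real \<Rightarrow> real \<Rightarrow> complex \<Rightarrow> complex" where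
  "H_num kat kv kp s = of_real kat * s ^ 2 + of_real kv * s + of_real kp"

definition H_den :: "real \<Rightarrow> real \<Rightarrow> real \<Rightarrow> real \<Rightarrow> complex \<Rightarrow> complex" where
  "H_den kv kp hw \<tau> s = of_real \<tau> * s ^ 3 + s ^ 2 + of_real (kv + hw * kp) * s + of_real kp"

definition H_tilde :: "real \<Rightarrow> real \<Rightarrow> real \<Rightarrow> real \<Rightarrow> real \<Rightarrow> complex \<Rightarrow> complex" where
  "H_tilde kat kv kp hw \<tau> s = H_num kat kv kp s / H_den kv kp hw \<tau> s"

definition Hinf_norm :: "real \<Rightarrow> real \<Rightarrow> real \<Rightarrow> real \<Rightarrow> real \<Rightarrow> ereal" where
  "Hinf_norm kat kv kp hw \<tau> =
     (SUP \<omega>::real. (if H_den kv kp hw \<tau> (\<i> * of_real \<omega>) = 0 then \<infinity>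
                    else ereal (cmod (H_tilde kat kv kp hw \<tau> (\<i> * of_real \<omega>)))))"

definition internally_stable :: "real \<Rightarrow> real \<Rightarrow> real \<Rightarrow> real \<Rightarrow> bool" where
  "internally_stable kv kp hw \<tau> \<longleftrightarrow> (\<forall>s. H_den kv kp hw \<tau> s = 0 \<longrightarrow> Re s < 0)"

definition h_wlb :: "real \<Rightarrow> real \<Rightarrow> real \<Rightarrow> real" where
  "h_wlb \<tau>0 \<rho> ka = 2 * \<tau>0 * (1 - (1 - 1/\<rho>) * ka) / (1 - (1 + 1/\<rho>)^2 * ka^2)"

end

theory Submission
  imports Defs
begin

text \<open>
  On the imaginary axis, with gamma = kv + hw kp,
  |H_den(i w)|^2 - |H_num(i w)|^2 = c1 w^2 + c2 w^4 + tau^2 w^6, where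
  c1 = gamma^2 - kv^2 - 2 kp (1 - kat) and c2 = 1 - kat^2 - 2 gamma tau.
  So the H-infinity norm is at most 1 once c1, c2 \<ge> 0 and the denominator is Hurwitz,
  which for the cubic tau s^3 + s^2 + gamma s + kp means gamma > tau kp (Routh-Hurwitz).
  Conversely, at w^2 = gamma/tau the gap equals w^2 ((1 - kat)((1 + kat) w^2 - 2 kp) - kv^2),
  which is negative when kat \<ge> 1; choosing tau small enough that tau kp \<le> gamma gives (a).
  For (b), kat ranges over [(1 - 1/rho) ka, (1 + 1/rho) ka], and hw > h_wlb is precisely the
  condition under which kv, kp can keep c1, c2 \<ge> 0 on that interval for all tau \<le> tau0.
  For (c), with r = 1/sqrt rho,
  h_wlb(k) = tau0 (1 + r)^2/(1 + r^2)
             + tau0 ((1 + r)(1 + r^2) k - (1 - r))^2 / ((1 + r^2)(1 - (1 + r^2)^2 k^2)),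
  and the second term is nonnegative on the admissible range and vanishes only at the stated k*.
\<close>

lemma norm_H_den_sq_minus_norm_H_num_sq:
  "(cmod (H_den kv kp hw \<tau> (\<i> * of_real \<omega>)))\<^sup>2 - (cmod (H_num kat kv kp (\<i> * of_real \<omega>)))\<^sup>2
     = \<omega>\<^sup>2 * ((kv + hw * kp)\<^sup>2 - kv\<^sup>2 - 2 * kp * (1 - kat))
       + \<omega>^4 * (1 - kat\<^sup>2 - 2 * (kv + hw * kp) * \<tau>) + \<tau>\<^sup>2 * \<omega>^6"
proof -
  have num: "H_num kat kv kp (\<i> * of_real \<omega>) = Complex (kp - kat * \<omega>\<^sup>2) (kv * \<omega>)"
    and den: "H_den kv kp hw \<tau> (\<i> * of_real \<omega>)
           = Complex (kp - \<omega>\<^sup>2) ((kv + hw * kp) * \<omega> - \<tau> * \<omega>^3)"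
    by (simp_all add: H_num_def H_den_def complex_eq_iff power2_eq_square power3_eq_cube)
  show ?thesis
    unfolding num den cmod_power2 complex.sel by (simp add: algebra_simps eval_nat_numeral)
qed

lemma Hinf_norm_le_1_iff:
  "Hinf_norm kat kv kp hw \<tau> \<le> 1 \<longleftrightarrow>
     (\<forall>\<omega>. H_den kv kp hw \<tau> (\<i> * of_real \<omega>) \<noteq> 0 \<and>
          (cmod (H_num kat kv kp (\<i> * of_real \<omega>)))\<^sup>2 \<le> (cmod (H_den kv kp hw \<tau> (\<i> * of_real \<omega>)))\<^sup>2)"
  unfolding Hinf_norm_def SUP_le_iff H_tilde_def
  by (auto simp: norm_divide divide_le_eq_1 power_mono_iff)

lemma cubic_Routh_Hurwitz:
  fixes a b c d :: real and s :: complex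
  assumes "0 < a" "0 < b" "0 < d" "a * d < b * c"
    and root: "of_real a * s^3 + of_real b * s\<^sup>2 + of_real c * s + of_real d = 0"
  shows "Re s < 0"
proof (rule ccontr)
  obtain x y where s: "s = Complex x y" by (metis complex.collapse)
  assume "\<not> Re s < 0"
  then have "0 \<le> x" by (simp add: s)
  have "0 < c" using assms(1-4) by (metis mult_pos_pos zero_less_mult_pos less_trans)
  from root have re: "a * x^3 + b * x\<^sup>2 + c * x + d = y\<^sup>2 * (3 * a * x + b)"
    and im: "y * (a * (3 * x\<^sup>2 - y\<^sup>2) + 2 * b * x + c) = 0"
    by (simp_all add: s complex_eq_iff power2_eq_square power3_eq_cube algebra_simps)
  show False
  proof (cases "y = 0")
    case True
    have "0 < a * x^3 + b * x\<^sup>2 + c * x + d"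
      using \<open>0 \<le> x\<close> \<open>0 < c\<close> assms(1-3) by (intro add_nonneg_pos) auto
    with re True show False by simp
  next
    case False
    with im have "a * (3 * x\<^sup>2 - y\<^sup>2) + 2 * b * x + c = 0" by simp
    then have "a * y\<^sup>2 = 3 * a * x\<^sup>2 + 2 * b * x + c" by (simp add: algebra_simps)
    with re have "a * (a * x^3 + b * x\<^sup>2 + c * x + d) = (3 * a * x\<^sup>2 + 2 * b * x + c) * (3 * a * x + b)"
      by (metis mult.assoc)
    then have "8 * a\<^sup>2 * x^3 + 8 * a * b * x\<^sup>2 + 2 * (b\<^sup>2 + a * c) * x + (b * c - a * d) = 0"
      by (simp add: algebra_simps power2_eq_square power3_eq_cube)
    moreover have "0 < 8 * a\<^sup>2 * x^3 + 8 * a * b * x\<^sup>2 + 2 * (b\<^sup>2 + a * c) * x + (b * c - a * d)"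
      using \<open>0 \<le> x\<close> \<open>0 < c\<close> assms(1-4) by (intro add_nonneg_pos) auto
    ultimately show False by simp
  qed
qed

lemma internally_stable_and_Hinf_norm_le_1:
  assumes "0 < \<tau>" "0 < kp" "\<tau> * kp < kv + hw * kp"
    and "2 * kp * (1 - kat) \<le> (kv + hw * kp)\<^sup>2 - kv\<^sup>2"
    and "2 * (kv + hw * kp) * \<tau> \<le> 1 - kat\<^sup>2"
  shows "internally_stable kv kp hw \<tau> \<and> Hinf_norm kat kv kp hw \<tau> \<le> 1"
proof
  show stable: "internally_stable kv kp hw \<tau>"
    unfolding internally_stable_def H_den_def
    using cubic_Routh_Hurwitz[of \<tau> 1 kp "kv + hw * kp"] assms(1-3) by auto
  show "Hinf_norm kat kv kp hw \<tau> \<le> 1"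
    unfolding Hinf_norm_le_1_iff
  proof
    fix \<omega> :: real
    have "H_den kv kp hw \<tau> (\<i> * of_real \<omega>) \<noteq> 0"
      using stable unfolding internally_stable_def by force
    moreover have "0 \<le> (cmod (H_den kv kp hw \<tau> (\<i> * of_real \<omega>)))\<^sup>2
                       - (cmod (H_num kat kv kp (\<i> * of_real \<omega>)))\<^sup>2"
      unfolding norm_H_den_sq_minus_norm_H_num_sq using assms(4,5)
      by (intro add_nonneg_nonneg mult_nonneg_nonneg) auto
    ultimately show "H_den kv kp hw \<tau> (\<i> * of_real \<omega>) \<noteq> 0 \<and>
        (cmod (H_num kat kv kp (\<i> * of_real \<omega>)))\<^sup>2 \<le> (cmod (H_den kv kp hw \<tau> (\<i> * of_real \<omega>)))\<^sup>2"
      by simp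
  qed
qed

lemma one_less_Hinf_norm_if_gain_ge_1:
  assumes "1 \<le> kat" "0 < kv" "0 < \<tau>" "0 < kv + hw * kp" "\<tau> * kp \<le> kv + hw * kp"
  shows "1 < Hinf_norm kat kv kp hw \<tau>"
proof -
  define \<omega> where "\<omega> = sqrt ((kv + hw * kp) / \<tau>)"
  have \<gamma>: "kv + hw * kp = \<tau> * \<omega>\<^sup>2"
    using assms(3,4) by (simp add: \<omega>_def)
  have "0 < \<omega>\<^sup>2" "kp \<le> \<omega>\<^sup>2"
    using assms(3-5) unfolding \<gamma> by (simp_all add: zero_less_mult_iff)
  have "(cmod (H_den kv kp hw \<tau> (\<i> * of_real \<omega>)))\<^sup>2 - (cmod (H_num kat kv kp (\<i> * of_real \<omega>)))\<^sup>2
      = \<omega>\<^sup>2 * ((1 - kat) * ((1 + kat) * \<omega>\<^sup>2 - 2 * kp) - kv\<^sup>2)"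
    unfolding norm_H_den_sq_minus_norm_H_num_sq \<gamma> by (simp add: algebra_simps eval_nat_numeral)
  also have "\<dots> < 0"
  proof -
    have "(1 - kat) * ((1 + kat) * \<omega>\<^sup>2 - 2 * kp) \<le> 0"
      using assms(1) \<open>kp \<le> \<omega>\<^sup>2\<close> \<open>0 < \<omega>\<^sup>2\<close>
      by (intro mult_nonpos_nonneg) (auto intro: order_trans[OF _ mult_right_mono[of 2 "1 + kat"]])
    moreover have "0 < kv\<^sup>2"
      using assms(2) by simp
    ultimately have "(1 - kat) * ((1 + kat) * \<omega>\<^sup>2 - 2 * kp) - kv\<^sup>2 < 0"
      by linarith
    with \<open>0 < \<omega>\<^sup>2\<close> show ?thesis
      by (rule mult_pos_neg)
  qed
  finally show ?thesis
    unfolding not_le[symmetric] Hinf_norm_le_1_iff by (auto simp: not_le)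
qed

lemma gain_lt_1_if_Hinf_norm_le_1:
  assumes "0 < \<tau>0" "0 < kp" "0 < kv" "0 \<le> hw"
    and "\<forall>\<tau>. 0 < \<tau> \<and> \<tau> \<le> \<tau>0 \<longrightarrow> Hinf_norm kat kv kp hw \<tau> \<le> 1"
  shows "kat < 1"
proof (rule ccontr)
  assume "\<not> kat < 1"
  define \<tau> where "\<tau> = min \<tau>0 ((kv + hw * kp) / kp)"
  have "0 < kv + hw * kp"
    using assms(2-4) by (simp add: add_pos_nonneg)
  then have "0 < \<tau>" "\<tau> \<le> \<tau>0" "\<tau> \<le> (kv + hw * kp) / kp"
    using assms(1,2) by (simp_all add: \<tau>_def)
  then have "\<tau> * kp \<le> kv + hw * kp"
    using assms(2) by (simp add: pos_le_divide_eq)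
  with \<open>\<not> kat < 1\<close> \<open>0 < kv + hw * kp\<close> \<open>0 < \<tau>\<close> assms(3) have "1 < Hinf_norm kat kv kp hw \<tau>"
    by (intro one_less_Hinf_norm_if_gain_ge_1) auto
  with assms(5) \<open>0 < \<tau>\<close> \<open>\<tau> \<le> \<tau>0\<close> show False
    by (simp add: not_le[symmetric])
qed

lemma ka_tilde_bounds:
  assumes "0 < \<rho>" "0 \<le> ka" "admissible_gammas n g"
  shows "(1 - 1/\<rho>) * ka \<le> ka_tilde \<rho> n g ka" "ka_tilde \<rho> n g ka \<le> (1 + 1/\<rho>) * ka"
proof -
  define S where "S = (\<Sum>j<n. g j / 2 ^ j)"
  have "0 \<le> S"
    using assms(3) unfolding S_def admissible_gammas_def by (intro sum_nonneg) auto
  have "S \<le> (\<Sum>j<n. (1/2) ^ j)"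
    using assms(3) unfolding S_def admissible_gammas_def
    by (intro sum_mono) (auto simp: power_one_over divide_right_mono)
  also have "\<dots> < 2"
    using geometric_sum_less[of "1/2 :: real" "{..<n}"] by simp
  finally have "S \<le> 2" by simp
  have "1 - 1/\<rho> \<le> 1 - 1/\<rho> + S/\<rho>" "1 - 1/\<rho> + S/\<rho> \<le> 1 + 1/\<rho>"
    using \<open>0 \<le> S\<close> \<open>S \<le> 2\<close> assms(1) by (simp_all add: divide_right_mono)
  moreover have "ka_tilde \<rho> n g ka = (1 - 1/\<rho> + S/\<rho>) * ka"
    by (simp add: ka_tilde_def S_def)
  ultimately show "(1 - 1/\<rho>) * ka \<le> ka_tilde \<rho> n g ka" "ka_tilde \<rho> n g ka \<le> (1 + 1/\<rho>) * ka"
    using assms(2) by (simp_all add: mult_right_mono)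
qed

lemma ka_tilde_in_unit_interval_if_Hinf_norm_le_1:
  assumes "0 < \<tau>0" "1 < \<rho>" "0 < ka" "0 < kp" "0 < kv" "0 \<le> hw" "admissible_gammas n g"
    and "\<forall>\<tau>. 0 < \<tau> \<and> \<tau> \<le> \<tau>0 \<longrightarrow> Hinf_norm (ka_tilde \<rho> n g ka) kv kp hw \<tau> \<le> 1"
  shows "0 < ka_tilde \<rho> n g ka \<and> ka_tilde \<rho> n g ka < 1"
proof
  have "0 < (1 - 1/\<rho>) * ka"
    using assms(2,3) by simp
  also have "\<dots> \<le> ka_tilde \<rho> n g ka"
    using ka_tilde_bounds(1)[OF _ _ assms(7)] assms(2,3) by simp
  finally show "0 < ka_tilde \<rho> n g ka" .
  show "ka_tilde \<rho> n g ka < 1"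
    using assms(4-6,8) by (rule gain_lt_1_if_Hinf_norm_le_1[OF assms(1)])
qed

lemma robust_gains_exist:
  assumes "0 < \<tau>0" "0 \<le> kmin" "kmin \<le> kmax" "kmax < 1"
    and hw: "2 * \<tau>0 * (1 - kmin) / (1 - kmax\<^sup>2) < hw"
  obtains kp kv where "0 < kp" "0 < kv"
    "\<And>kat \<tau>. kmin \<le> kat \<Longrightarrow> kat \<le> kmax \<Longrightarrow> 0 < \<tau> \<Longrightarrow> \<tau> \<le> \<tau>0 \<Longrightarrow>
       internally_stable kv kp hw \<tau> \<and> Hinf_norm kat kv kp hw \<tau> \<le> 1"
proof -
  have "0 < 1 - kmax\<^sup>2"
    using assms(2-4) by (simp add: abs_square_less_1)
  then have "0 < 2 * \<tau>0 * (1 - kmin) / (1 - kmax\<^sup>2)"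
    using assms(1,3,4) by simp
  with hw have "0 < hw"
    by linarith
  \<comment> \<open>kv \<ge> B makes the w^2 coefficient c1 nonnegative and kv + hw kp \<le> A the w^4
      coefficient c2 for all tau \<le> tau0; the bound on hw says exactly B < A, and kp is then
      taken small enough that also tau0 kp < kv (Hurwitz).\<close>
  define A where "A = (1 - kmax\<^sup>2) / (2 * \<tau>0)"
  define B where "B = (1 - kmin) / hw"
  have "0 < B"
    using assms(3,4) \<open>0 < hw\<close> by (simp add: B_def)
  have "B < A"
    using hw \<open>0 < 1 - kmax\<^sup>2\<close> \<open>0 < hw\<close> assms(1)
    by (simp add: A_def B_def field_simps)
  define kv where "kv = (A + B) / 2"
  define kp where "kp = (A - B) / (2 * (hw + \<tau>0))"
  have "0 < kp" "0 < kv" "B \<le> kv"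
    using \<open>0 < B\<close> \<open>B < A\<close> \<open>0 < hw\<close> assms(1) by (simp_all add: kp_def kv_def)
  have "hw * kp \<le> (A - B) / 2" "\<tau>0 * kp \<le> (A - B) / 2"
    using \<open>B < A\<close> \<open>0 < hw\<close> assms(1) by (simp_all add: kp_def field_simps)
  then have "kv + hw * kp \<le> A" "\<tau>0 * kp < kv"
    using \<open>0 < B\<close> by (simp_all add: kv_def field_simps)
  show thesis
  proof (rule that[OF \<open>0 < kp\<close> \<open>0 < kv\<close>])
    fix kat \<tau> assume kat: "kmin \<le> kat" "kat \<le> kmax" and \<tau>: "0 < \<tau>" "\<tau> \<le> \<tau>0"
    show "internally_stable kv kp hw \<tau> \<and> Hinf_norm kat kv kp hw \<tau> \<le> 1"
    proof (rule internally_stable_and_Hinf_norm_le_1[OF \<tau>(1) \<open>0 < kp\<close>])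
      have "\<tau> * kp \<le> \<tau>0 * kp" "0 < hw * kp"
        using \<tau>(2) \<open>0 < kp\<close> \<open>0 < hw\<close> by simp_all
      with \<open>\<tau>0 * kp < kv\<close> show "\<tau> * kp < kv + hw * kp"
        by linarith
      have "1 - kat \<le> hw * kv"
        using kat(1) \<open>B \<le> kv\<close> \<open>0 < hw\<close> by (simp add: B_def field_simps)
      then have "2 * kp * (1 - kat) \<le> 2 * kp * (hw * kv)"
        using \<open>0 < kp\<close> by simp
      also have "\<dots> \<le> 2 * kp * (hw * kv) + (hw * kp)\<^sup>2"
        by simp
      also have "\<dots> = (kv + hw * kp)\<^sup>2 - kv\<^sup>2"
        by (simp add: algebra_simps power2_eq_square)
      finally show "2 * kp * (1 - kat) \<le> (kv + hw * kp)\<^sup>2 - kv\<^sup>2" .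
      have "2 * (kv + hw * kp) * \<tau> \<le> 2 * A * \<tau>0"
        using \<open>kv + hw * kp \<le> A\<close> \<tau> \<open>0 < B\<close> \<open>B < A\<close> \<open>0 < kv\<close> \<open>0 < kp\<close> \<open>0 < hw\<close>
        by (intro mult_mono) auto
      moreover have "kat\<^sup>2 \<le> kmax\<^sup>2"
        using kat assms(2) by (intro power_mono) auto
      ultimately show "2 * (kv + hw * kp) * \<tau> \<le> 1 - kat\<^sup>2"
        using assms(1) by (simp add: A_def)
    qed
  qed
qed

lemma robust_string_stability_design:
  assumes "0 < \<tau>0" "1 < \<rho>" "0 < ka" "ka < 1 / (1 + 1/\<rho>)" "h_wlb \<tau>0 \<rho> ka < hw"
  shows "\<exists>kp kv. kp > 0 \<and> kv > 0 \<and>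
           (\<forall>g. admissible_gammas n g \<longrightarrow> (\<forall>\<tau>. 0 < \<tau> \<and> \<tau> \<le> \<tau>0 \<longrightarrow>
              internally_stable kv kp hw \<tau> \<and> Hinf_norm (ka_tilde \<rho> n g ka) kv kp hw \<tau> \<le> 1))"
proof -
  define kmin where "kmin = (1 - 1/\<rho>) * ka"
  define kmax where "kmax = (1 + 1/\<rho>) * ka"
  have "0 \<le> kmin" "kmin \<le> kmax"
    using assms(2,3) by (simp_all add: kmin_def kmax_def)
  have "kmax < 1"
    using assms(2,4) by (simp add: kmax_def pos_less_divide_eq mult.commute add_pos_pos)
  have "2 * \<tau>0 * (1 - kmin) / (1 - kmax\<^sup>2) < hw"
    using assms(5) by (simp add: h_wlb_def kmin_def kmax_def power_mult_distrib)
  then obtain kp kv where "0 < kp" "0 < kv" and design: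
    "\<And>kat \<tau>. kmin \<le> kat \<Longrightarrow> kat \<le> kmax \<Longrightarrow> 0 < \<tau> \<Longrightarrow> \<tau> \<le> \<tau>0 \<Longrightarrow>
       internally_stable kv kp hw \<tau> \<and> Hinf_norm kat kv kp hw \<tau> \<le> 1"
    using robust_gains_exist[OF assms(1) \<open>0 \<le> kmin\<close> \<open>kmin \<le> kmax\<close> \<open>kmax < 1\<close>] by blast
  moreover have "kmin \<le> ka_tilde \<rho> n g ka" "ka_tilde \<rho> n g ka \<le> kmax" if "admissible_gammas n g" for g
    using ka_tilde_bounds[OF _ _ that] assms(2,3) by (simp_all add: kmin_def kmax_def)
  ultimately show ?thesis
    by blast
qed

lemma h_wlb_eq_minimum_plus_square:
  fixes r :: real
  assumes "1/\<rho> = r\<^sup>2" "((1 + r\<^sup>2) * k)\<^sup>2 \<noteq> 1"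
  shows "h_wlb \<tau>0 \<rho> k = \<tau>0 * (1 + r)\<^sup>2 / (1 + r\<^sup>2)
           + \<tau>0 * ((1 + r) * (1 + r\<^sup>2) * k - (1 - r))\<^sup>2 / ((1 + r\<^sup>2) * (1 - ((1 + r\<^sup>2) * k)\<^sup>2))"
proof -
  define u where "u = (1 + r\<^sup>2) * k"
  have "1 - u\<^sup>2 \<noteq> 0"
    using assms(2) by (simp add: u_def)
  have "1 + r\<^sup>2 \<noteq> 0"
    using zero_le_power2[of r] by linarith
  have "h_wlb \<tau>0 \<rho> k = 2 * \<tau>0 * (1 - (1 - r\<^sup>2) * k) / (1 - u\<^sup>2)"
    by (simp add: h_wlb_def assms(1) u_def power_mult_distrib)
  also have "\<dots> = \<tau>0 * ((1 + r\<^sup>2) * (2 * (1 - (1 - r\<^sup>2) * k))) / ((1 + r\<^sup>2) * (1 - u\<^sup>2))"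
    using \<open>1 + r\<^sup>2 \<noteq> 0\<close> by simp
  also have "(1 + r\<^sup>2) * (2 * (1 - (1 - r\<^sup>2) * k)) = (1 + r)\<^sup>2 * (1 - u\<^sup>2) + ((1 + r) * u - (1 - r))\<^sup>2"
    unfolding u_def by algebra
  also have "\<tau>0 * ((1 + r)\<^sup>2 * (1 - u\<^sup>2) + ((1 + r) * u - (1 - r))\<^sup>2) / ((1 + r\<^sup>2) * (1 - u\<^sup>2))
      = \<tau>0 * (1 + r)\<^sup>2 / (1 + r\<^sup>2) + \<tau>0 * ((1 + r) * u - (1 - r))\<^sup>2 / ((1 + r\<^sup>2) * (1 - u\<^sup>2))"
    using \<open>1 - u\<^sup>2 \<noteq> 0\<close>
    by (simp add: distrib_left add_divide_distrib mult.assoc[symmetric]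
        nonzero_mult_divide_mult_cancel_right)
  finally show ?thesis
    by (simp add: u_def mult.assoc)
qed

lemma h_wlb_ge_minimum:
  assumes "0 < \<tau>0" "1 < \<rho>" "0 < k" "k < 1 / (1 + 1/\<rho>)"
  shows "\<tau>0 * (1 + 1/sqrt \<rho>)\<^sup>2 / (1 + 1/\<rho>) \<le> h_wlb \<tau>0 \<rho> k"
    and "h_wlb \<tau>0 \<rho> k = \<tau>0 * (1 + 1/sqrt \<rho>)\<^sup>2 / (1 + 1/\<rho>)
           \<longleftrightarrow> k = (1 - 1/sqrt \<rho>) / (1 + 1/sqrt \<rho>) * (1 / (1 + 1/\<rho>))"
proof -
  define r where "r = 1 / sqrt \<rho>"
  have r: "1/\<rho> = r\<^sup>2" "0 < r"
    using assms(2) by (simp_all add: r_def power_one_over)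
  have "0 < (1 + r\<^sup>2) * k" "(1 + r\<^sup>2) * k < 1"
    using assms(3,4) unfolding r(1) by (simp_all add: pos_less_divide_eq mult.commute add_pos_nonneg)
  then have "0 < 1 - ((1 + r\<^sup>2) * k)\<^sup>2"
    by (simp add: abs_square_less_1)
  define D where "D = (1 + r\<^sup>2) * (1 - ((1 + r\<^sup>2) * k)\<^sup>2)"
  define excess where "excess = \<tau>0 * ((1 + r) * (1 + r\<^sup>2) * k - (1 - r))\<^sup>2 / D"
  have h: "h_wlb \<tau>0 \<rho> k = \<tau>0 * (1 + r)\<^sup>2 / (1 + r\<^sup>2) + excess"
    using h_wlb_eq_minimum_plus_square[OF r(1)] \<open>0 < 1 - ((1 + r\<^sup>2) * k)\<^sup>2\<close>
    by (simp add: excess_def D_def)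
  have "0 < D"
    using \<open>0 < 1 - ((1 + r\<^sup>2) * k)\<^sup>2\<close> by (simp add: D_def add_pos_nonneg)
  then have "0 \<le> excess" "excess = 0 \<longleftrightarrow> (1 + r) * (1 + r\<^sup>2) * k = 1 - r"
    using assms(1) by (simp_all add: excess_def)
  moreover have "(1 + r) * (1 + r\<^sup>2) * k = 1 - r \<longleftrightarrow> k = (1 - r) / (1 + r) * (1 / (1 + r\<^sup>2))"
  proof -
    have "0 < (1 + r) * (1 + r\<^sup>2)"
      using r(2) zero_le_power2[of r] by (intro mult_pos_pos) linarith+
    then have "(1 + r) * (1 + r\<^sup>2) \<noteq> 0"
      by (rule less_imp_neq[symmetric])
    then show ?thesis
      by (auto simp: eq_divide_eq ac_simps)
  qed
  ultimately show "\<tau>0 * (1 + 1/sqrt \<rho>)\<^sup>2 / (1 + 1/\<rho>) \<le> h_wlb \<tau>0 \<rho> k"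
    and "h_wlb \<tau>0 \<rho> k = \<tau>0 * (1 + 1/sqrt \<rho>)\<^sup>2 / (1 + 1/\<rho>)
           \<longleftrightarrow> k = (1 - 1/sqrt \<rho>) / (1 + 1/sqrt \<rho>) * (1 / (1 + 1/\<rho>))"
    unfolding h r(1) by (simp_all flip: r_def)
qed

lemma h_wlb_argmin:
  assumes "0 < \<tau>0" "1 < \<rho>"
  defines "kstar \<equiv> (1 - 1/sqrt \<rho>) / (1 + 1/sqrt \<rho>) * (1 / (1 + 1/\<rho>))"
  shows "0 < kstar" "kstar < 1 / (1 + 1/\<rho>)"
    and "h_wlb \<tau>0 \<rho> kstar = \<tau>0 * (1 + 1/sqrt \<rho>)\<^sup>2 / (1 + 1/\<rho>)"
    and "\<And>k. 0 < k \<Longrightarrow> k < 1 / (1 + 1/\<rho>) \<Longrightarrow> h_wlb \<tau>0 \<rho> kstar \<le> h_wlb \<tau>0 \<rho> k"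
    and "\<And>k. 0 < k \<Longrightarrow> k < 1 / (1 + 1/\<rho>) \<Longrightarrow> h_wlb \<tau>0 \<rho> k = h_wlb \<tau>0 \<rho> kstar \<Longrightarrow> k = kstar"
proof -
  define r where "r = 1/sqrt \<rho>"
  have "0 < r" "r < 1" "0 < 1 / (1 + 1/\<rho>)"
    using assms(2) by (simp_all add: r_def add_pos_pos)
  then have q: "0 < (1 - 1/sqrt \<rho>) / (1 + 1/sqrt \<rho>)" "(1 - 1/sqrt \<rho>) / (1 + 1/sqrt \<rho>) < 1"
    by (simp_all flip: r_def)
  show kstar_pos: "0 < kstar"
    unfolding kstar_def by (rule mult_pos_pos[OF q(1) \<open>0 < 1 / (1 + 1/\<rho>)\<close>])
  show kstar_less: "kstar < 1 / (1 + 1/\<rho>)"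
    unfolding kstar_def using mult_strict_right_mono[OF q(2) \<open>0 < 1 / (1 + 1/\<rho>)\<close>]
    by (simp only: mult_1)
  show h_kstar: "h_wlb \<tau>0 \<rho> kstar = \<tau>0 * (1 + 1/sqrt \<rho>)\<^sup>2 / (1 + 1/\<rho>)"
    by (rule h_wlb_ge_minimum(2)[OF assms(1,2) kstar_pos kstar_less, THEN iffD2])
      (simp only: kstar_def)
  show "h_wlb \<tau>0 \<rho> kstar \<le> h_wlb \<tau>0 \<rho> k" if "0 < k" "k < 1 / (1 + 1/\<rho>)" for k
    unfolding h_kstar by (rule h_wlb_ge_minimum(1)[OF assms(1,2) that])
  show "k = kstar" if "0 < k" "k < 1 / (1 + 1/\<rho>)" "h_wlb \<tau>0 \<rho> k = h_wlb \<tau>0 \<rho> kstar" for k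
  proof -
    have "h_wlb \<tau>0 \<rho> k = \<tau>0 * (1 + 1/sqrt \<rho>)\<^sup>2 / (1 + 1/\<rho>)"
      using that(3) unfolding h_kstar .
    then show ?thesis
      unfolding kstar_def by (rule h_wlb_ge_minimum(2)[OF assms(1,2) that(1,2), THEN iffD1])
  qed
qed

theorem theorem2:
  fixes \<tau>0 \<rho> :: real and n :: nat
  assumes "\<tau>0 > 0" and "\<rho> > 1" and "n \<ge> 1"
  shows
  \<comment> \<open>(a)\<close>
  "(\<forall>ka kp kv hw g. ka > 0 \<longrightarrow> kp > 0 \<longrightarrow> kv > 0 \<longrightarrow> hw > 0 \<longrightarrow> admissible_gammas n g \<longrightarrow>
      (\<forall>\<tau>. 0 < \<tau> \<and> \<tau> \<le> \<tau>0 \<longrightarrow> Hinf_norm (ka_tilde \<rho> n g ka) kv kp hw \<tau> \<le> 1) \<longrightarrow>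
      0 < ka_tilde \<rho> n g ka \<and> ka_tilde \<rho> n g ka < 1)
   \<and>
  \<comment> \<open>(b)\<close>
   (\<forall>ka hw. 0 < ka \<and> ka < 1 / (1 + 1/\<rho>) \<longrightarrow> hw > h_wlb \<tau>0 \<rho> ka \<longrightarrow>
      (\<exists>kp kv. kp > 0 \<and> kv > 0 \<and>
         (\<forall>g. admissible_gammas n g \<longrightarrow> (\<forall>\<tau>. 0 < \<tau> \<and> \<tau> \<le> \<tau>0 \<longrightarrow>
            internally_stable kv kp hw \<tau> \<and> Hinf_norm (ka_tilde \<rho> n g ka) kv kp hw \<tau> \<le> 1))))
   \<and>
  \<comment> \<open>(c)\<close>
   (let kstar = ((1 - 1/sqrt \<rho>) / (1 + 1/sqrt \<rho>)) * (1 / (1 + 1/\<rho>)) in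
      0 < kstar \<and> kstar < 1 / (1 + 1/\<rho>)
    \<and> (\<forall>ka. 0 < ka \<and> ka < 1 / (1 + 1/\<rho>) \<longrightarrow> h_wlb \<tau>0 \<rho> kstar \<le> h_wlb \<tau>0 \<rho> ka)
    \<and> (\<forall>ka. 0 < ka \<and> ka < 1 / (1 + 1/\<rho>) \<longrightarrow> h_wlb \<tau>0 \<rho> ka = h_wlb \<tau>0 \<rho> kstar \<longrightarrow> ka = kstar)
    \<and> h_wlb \<tau>0 \<rho> kstar = \<tau>0 * (1 + 1/sqrt \<rho>)^2 / (1 + 1/\<rho>)
    \<and> (\<forall>hw. hw > h_wlb \<tau>0 \<rho> kstar \<longrightarrow>
         (\<exists>kp kv. kp > 0 \<and> kv > 0 \<and>
            (\<forall>g. admissible_gammas n g \<longrightarrow> (\<forall>\<tau>. 0 < \<tau> \<and> \<tau> \<le> \<tau>0 \<longrightarrow>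
               Hinf_norm (ka_tilde \<rho> n g kstar) kv kp hw \<tau> \<le> 1)))))"
proof -
  define kstar where "kstar = ((1 - 1/sqrt \<rho>) / (1 + 1/sqrt \<rho>)) * (1 / (1 + 1/\<rho>))"
  note argmin = h_wlb_argmin[OF assms(1,2), folded kstar_def]
  have part_a: "\<forall>ka kp kv hw g. ka > 0 \<longrightarrow> kp > 0 \<longrightarrow> kv > 0 \<longrightarrow> hw > 0 \<longrightarrow> admissible_gammas n g \<longrightarrow>
      (\<forall>\<tau>. 0 < \<tau> \<and> \<tau> \<le> \<tau>0 \<longrightarrow> Hinf_norm (ka_tilde \<rho> n g ka) kv kp hw \<tau> \<le> 1) \<longrightarrow>
      0 < ka_tilde \<rho> n g ka \<and> ka_tilde \<rho> n g ka < 1"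
    using ka_tilde_in_unit_interval_if_Hinf_norm_le_1[OF assms(1,2)] by (blast intro: less_imp_le)
  have part_b: "\<forall>ka hw. 0 < ka \<and> ka < 1 / (1 + 1/\<rho>) \<longrightarrow> hw > h_wlb \<tau>0 \<rho> ka \<longrightarrow>
      (\<exists>kp kv. kp > 0 \<and> kv > 0 \<and>
         (\<forall>g. admissible_gammas n g \<longrightarrow> (\<forall>\<tau>. 0 < \<tau> \<and> \<tau> \<le> \<tau>0 \<longrightarrow>
            internally_stable kv kp hw \<tau> \<and> Hinf_norm (ka_tilde \<rho> n g ka) kv kp hw \<tau> \<le> 1)))"
    using robust_string_stability_design[OF assms(1,2)] by simp
  have part_c: "\<forall>hw. hw > h_wlb \<tau>0 \<rho> kstar \<longrightarrow>
      (\<exists>kp kv. kp > 0 \<and> kv > 0 \<and>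
         (\<forall>g. admissible_gammas n g \<longrightarrow> (\<forall>\<tau>. 0 < \<tau> \<and> \<tau> \<le> \<tau>0 \<longrightarrow>
            Hinf_norm (ka_tilde \<rho> n g kstar) kv kp hw \<tau> \<le> 1)))"
    using part_b argmin(1,2) by blast
  have "\<forall>ka. 0 < ka \<and> ka < 1 / (1 + 1/\<rho>) \<longrightarrow> h_wlb \<tau>0 \<rho> kstar \<le> h_wlb \<tau>0 \<rho> ka"
    and "\<forall>ka. 0 < ka \<and> ka < 1 / (1 + 1/\<rho>) \<longrightarrow> h_wlb \<tau>0 \<rho> ka = h_wlb \<tau>0 \<rho> kstar \<longrightarrow> ka = kstar"
    using argmin(4,5) by blast+
  then show ?thesis
    unfolding Let_def kstar_def[symmetric] by (intro conjI part_a part_b part_c argmin(1-3))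
qed

end
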